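(* Consider RejectionSampling run on $P$ and $k$ with parameter $c>1$, and assume the LSH data structure is successful. In the first iteration in which a point is added to $S$ (i.e. when $S=\emptyset$), each point $x\in P$ is the point added with probability $1/n$. In every later step, given the current set $S\neq\emptyset$, the probability that the next point added to $S$ is $x\in P$ equals $\dfrac{\mathrm{Dist}(x,\mathrm{Query}(x))^2}{\sum_{y\in P}\mathrm{Dist}(y,\mathrm{Query}(y))^2}$, where Query is answered by the LSH data structure containing the points of $S$; in particular this probability does not depend on the random multi-tree embedding.
   Context: $P\subseteq\mathbb{R}^d$ has $n$ points; $\mathrm{Dist}(x,y)=\|x-y\|_2$, $\mathrm{Dist}(x,C)=\min_{y\in C}\mathrm{Dist}(x,y)$. Tree embedding: compute $\mathrm{MaxDist}$, an upper bound on the maximum pairwise distance within factor $2$ of it; add a uniformly random shift $s\in[0,\mathrm{MaxDist}]$ to each coordinate of all points; the root (height $0$) is the axis-aligned cube of side $2\,\mathrm{MaxDist}$ centered at an input point; recursively each node cube of side $L$ at height $i$ is split into $2^d$ subcubes of side $L/2$, nonempty ones becoming children connected by edges of weight $\sqrt d\,\mathrm{MaxDist}/2^i$, until each cube holds at most one point. $\mathrm{TreeDist}_T$ is the shortest-path distance in tree $T$; the multi-tree embedding has three such trees with independent shifts, $\mathrm{MultiTreeDist}$ is the minimum of the three tree distances, $\mathrm{MultiTreeDist}(p,S)=\min_{q\in S}\mathrm{MultiTreeDist}(p,q)$. MultiTreeSample() returns each $x\in P$ with probability $\mathrm{MultiTreeDist}(x,S)^2/\sum_{y\in P}\mathrm{MultiTreeDist}(y,S)^2$,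 where $S$ is the set of points opened so far by MultiTreeOpen (with $\mathrm{MultiTreeDist}(x,\emptyset)^2$ a constant $M$ independent of $x$). LSH data structure (parameter $c$): supports Insert$(p)$ and Query$(p)$; it is successful if Query$(p)$ always returns an inserted point at distance at most $c\cdot\delta$ from $p$, where $\delta$ is the minimum distance from $p$ to an inserted point. RejectionSampling$(P,k)$: $S\leftarrow\emptyset$; build the multi-tree embedding; while $|S|<k$: $x\leftarrow$ MultiTreeSample(); with probability $\min\{1,\mathrm{Dist}(x,\mathrm{Query}(x))^2/(c^2\,\mathrm{MultiTreeDist}(x,S)^2)\}$ (probability $1$ when $S=\emptyset$): $S\leftarrow S\cup\{x\}$, MultiTreeOpen$(x)$, Insert$(x)$. Output $S$. *)

theory Defs
  imports "HOL-Analysis.Analysis" "HOL-Probability.Probability"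
begin

text \<open>One tree is determined by MaxDist MD, the input point p0 (before shifting) at which the
root cube is centred, and the shift s added to every coordinate of all points.  After shifting,
the root cube (height 0) is centred at the shifted point p0 + s, has side 2 MD, so its lower
corner in coordinate b is p0.b + s - MD.  The cube at height i containing a (shifted) point has
side 2 MD / 2^i; its index in coordinate b is given below (the upper boundary face of the closed
root cube is attributed to the last sub-cube).\<close>

definition cell :: "real \<Rightarrow> 'a::euclidean_space \<Rightarrow> real \<Rightarrow> nat \<Rightarrow> 'a \<Rightarrow> 'a \<Rightarrow> int" where
  "cell MD p0 s i x b =
     min (\<lfloor>((x \<bullet> b + s) - (p0 \<bullet> b + s - MD)) / (2 * MD / 2 ^ i)\<rfloor>) (2 ^ i - 1)"

definition same_cell :: "real \<Rightarrow> 'a::euclidean_space \<Rightarrow> real \<Rightarrow> nat \<Rightarrow> 'a \<Rightarrow> 'a \<Rightarrow> bool" where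
  "same_cell MD p0 s i x y = (\<forall>b\<in>Basis. cell MD p0 s i x b = cell MD p0 s i y b)"

text \<open>Smallest height at which x and y lie in different cubes (their lowest common ancestor
is at height sep_height - 1).\<close>
definition sep_height :: "real \<Rightarrow> 'a::euclidean_space \<Rightarrow> real \<Rightarrow> 'a \<Rightarrow> 'a \<Rightarrow> nat" where
  "sep_height MD p0 s x y = (LEAST i. \<not> same_cell MD p0 s i x y)"

definition leaf_height :: "'a set \<Rightarrow> real \<Rightarrow> 'a::euclidean_space \<Rightarrow> real \<Rightarrow> 'a \<Rightarrow> nat" where
  "leaf_height P MD p0 s x = (LEAST i. \<forall>y\<in>P. y \<noteq> x \<longrightarrow> \<not> same_cell MD p0 s i x y)"

text \<open>Weight of an edge between a node at height i and its child.\<close>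
definition edge_weight :: "'a::euclidean_space itself \<Rightarrow> real \<Rightarrow> nat \<Rightarrow> real" where
  "edge_weight _ MD i = sqrt (real DIM('a)) * MD / 2 ^ i"

definition tree_dist :: "'a set \<Rightarrow> real \<Rightarrow> 'a::euclidean_space \<Rightarrow> real \<Rightarrow> 'a \<Rightarrow> 'a \<Rightarrow> real" where
  "tree_dist P MD p0 s x y =
     (if x = y then 0 else
        (\<Sum>j\<in>{sep_height MD p0 s x y - 1..<leaf_height P MD p0 s x}. edge_weight TYPE('a) MD j)
      + (\<Sum>j\<in>{sep_height MD p0 s x y - 1..<leaf_height P MD p0 s y}. edge_weight TYPE('a) MD j))"

text \<open>Multi-tree embedding: three trees, given by (root centre, shift) pairs.\<close>
type_synonym 'a trees3 = "('a \<times> real) \<times> ('a \<times> real) \<times> ('a \<times> real)"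

definition multi_tree_dist :: "'a set \<Rightarrow> real \<Rightarrow> 'a::euclidean_space trees3 \<Rightarrow> 'a \<Rightarrow> 'a \<Rightarrow> real" where
  "multi_tree_dist P MD T x y =
     (case T of ((p1, s1), (p2, s2), (p3, s3)) \<Rightarrow>
        min (tree_dist P MD p1 s1 x y) (min (tree_dist P MD p2 s2 x y) (tree_dist P MD p3 s3 x y)))"

definition multi_tree_dist_set :: "'a set \<Rightarrow> real \<Rightarrow> 'a::euclidean_space trees3 \<Rightarrow> 'a \<Rightarrow> 'a set \<Rightarrow> real" where
  "multi_tree_dist_set P MD T x S = Min ((\<lambda>q. multi_tree_dist P MD T x q) ` S)"

definition mt_weight :: "'a set \<Rightarrow> real \<Rightarrow> 'a::euclidean_space trees3 \<Rightarrow> real \<Rightarrow> 'a set \<Rightarrow> 'a \<Rightarrow> real" where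
  "mt_weight P MD T M S x = (if S = {} then M else (multi_tree_dist_set P MD T x S)\<^sup>2)"

definition multi_tree_sample :: "'a set \<Rightarrow> real \<Rightarrow> 'a::euclidean_space trees3 \<Rightarrow> real \<Rightarrow> 'a set \<Rightarrow> 'a pmf" where
  "multi_tree_sample P MD T M S =
     embed_pmf (\<lambda>x. if x \<in> P then mt_weight P MD T M S x / (\<Sum>y\<in>P. mt_weight P MD T M S y) else 0)"

definition accept_prob :: "'a set \<Rightarrow> real \<Rightarrow> 'a::euclidean_space trees3 \<Rightarrow> real \<Rightarrow> 'a set \<Rightarrow> ('a \<Rightarrow> 'a) \<Rightarrow> 'a \<Rightarrow> real" where
  "accept_prob P MD T c S Q x =
     (if S = {} then 1
      else min 1 ((dist x (Q x))\<^sup>2 / (c\<^sup>2 * (multi_tree_dist_set P MD T x S)\<^sup>2)))"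

text \<open>The inner loop of RejectionSampling for a fixed current set S (and LSH query answers Q for
the structure containing S): repeatedly sample and accept/reject until a point is accepted;
the result is the next point added to S.\<close>
partial_function (spmf) next_added ::
  "'a set \<Rightarrow> real \<Rightarrow> 'a::euclidean_space trees3 \<Rightarrow> real \<Rightarrow> real \<Rightarrow> 'a set \<Rightarrow> ('a \<Rightarrow> 'a) \<Rightarrow> 'a spmf"
where
  "next_added P MD T M c S Q =
     bind_spmf (spmf_of_pmf (multi_tree_sample P MD T M S)) (\<lambda>x.
       bind_spmf (spmf_of_pmf (bernoulli_pmf (accept_prob P MD T c S Q x))) (\<lambda>b.
         if b then return_spmf x else next_added P MD T M c S Q))"

text \<open>Query answers Q of an LSH structure containing exactly the points of S are successful:
every query returns an inserted point within c times the distance to the nearest inserted point.\<close>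
definition lsh_successful :: "'a set \<Rightarrow> 'a::metric_space set \<Rightarrow> real \<Rightarrow> ('a \<Rightarrow> 'a) \<Rightarrow> bool" where
  "lsh_successful P S c Q =
     (\<forall>p\<in>P. Q p \<in> S \<and> dist p (Q p) \<le> c * Min ((\<lambda>q. dist p q) ` S))"

end

theory Submission
  imports Defs
begin

text \<open>One round of RejectionSampling is a retry loop: it stops at x with probability
(probability of sampling x) \<times> (probability of accepting x), and otherwise starts afresh, so the
point it returns is distributed proportionally to that product.  For S = {} the product is
1/n.  For S \<noteq> {} the key geometric fact is that tree distances dominate Euclidean distances:
two points sharing a cube at height h are at Euclidean distance at most its diameter, which is
the total weight of the two edges below that cube on the tree path between them.  Hence
MultiTreeDist(x,S) \<ge> Dist(x,S), so by LSH success Dist(x,Query(x)) \<le> c MultiTreeDist(x,S), the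
acceptance probability is never truncated at 1, and the product equals
Dist(x,Query(x))^2 / (c^2 \<Sum>y MultiTreeDist(y,S)^2); the tree-dependent denominator cancels
upon normalisation.\<close>

lemma cell_index_bounds:
  fixes x p0 b :: "'a::euclidean_space" and i :: nat
  assumes md: "MD > 0" and le: "x \<bullet> b - p0 \<bullet> b \<le> MD"
  defines "v \<equiv> (x \<bullet> b - p0 \<bullet> b + MD) / (2 * MD / 2 ^ i)"
  shows "real_of_int (cell MD p0 s i x b) \<le> v \<and> v \<le> real_of_int (cell MD p0 s i x b) + 1"
proof -
  have cell: "cell MD p0 s i x b = min \<lfloor>v\<rfloor> (2 ^ i - 1)"
    unfolding cell_def v_def by (simp add: algebra_simps)
  have "v = (x \<bullet> b - p0 \<bullet> b + MD) * 2 ^ i / (2 * MD)" unfolding v_def by simp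
  also have "\<dots> \<le> (2 * MD) * 2 ^ i / (2 * MD)"
    using le md by (intro divide_right_mono mult_right_mono) auto
  also have "\<dots> = 2 ^ i" using md by simp
  finally have v_le: "v \<le> 2 ^ i" .
  show ?thesis
  proof (cases "\<lfloor>v\<rfloor> \<le> 2 ^ i - 1")
    case True
    then show ?thesis unfolding cell by (simp add: min_def)
  next
    case False
    then have "(2::int) ^ i \<le> \<lfloor>v\<rfloor>" by simp
    then have "real_of_int ((2::int) ^ i) \<le> v" by (simp only: le_floor_iff)
    with v_le False show ?thesis unfolding cell by simp
  qed
qed

lemma same_cell_imp_coord_dist_le:
  fixes x y p0 :: "'a::euclidean_space"
  assumes md: "MD > 0" and "dist x p0 \<le> MD" and "dist y p0 \<le> MD"
    and "same_cell MD p0 s i x y" and b: "b \<in> Basis"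
  shows "\<bar>x \<bullet> b - y \<bullet> b\<bar> \<le> 2 * MD / 2 ^ i"
proof -
  have coord_le: "z \<bullet> b - p0 \<bullet> b \<le> MD" if "dist z p0 \<le> MD" for z
    using Basis_le_norm[OF b, of "z - p0"] that by (simp add: dist_norm inner_diff_left)
  define w where "w = 2 * MD / 2 ^ i"
  have w: "w > 0" using md by (simp add: w_def)
  have "cell MD p0 s i x b = cell MD p0 s i y b" using assms(4) b by (simp add: same_cell_def)
  then have "\<bar>(x \<bullet> b - p0 \<bullet> b + MD) / w - (y \<bullet> b - p0 \<bullet> b + MD) / w\<bar> \<le> 1"
    using cell_index_bounds[OF md coord_le, of x s i] cell_index_bounds[OF md coord_le, of y s i]
      assms(2,3) unfolding w_def by linarith
  then have "\<bar>x \<bullet> b - y \<bullet> b\<bar> / w \<le> 1"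
    using w by (simp add: diff_divide_distrib[symmetric])
  then show ?thesis using w unfolding w_def[symmetric] by (simp add: divide_le_eq)
qed

lemma same_cell_imp_dist_le:
  fixes x y p0 :: "'a::euclidean_space"
  assumes "MD > 0" and "dist x p0 \<le> MD" and "dist y p0 \<le> MD" and "same_cell MD p0 s i x y"
  shows "dist x y \<le> sqrt DIM('a) * (2 * MD / 2 ^ i)"
proof -
  have "infnorm (x - y) \<le> 2 * MD / 2 ^ i"
    unfolding infnorm_Max
    using same_cell_imp_coord_dist_le[OF assms] by (simp add: inner_diff_left)
  then have "sqrt DIM('a) * infnorm (x - y) \<le> sqrt DIM('a) * (2 * MD / 2 ^ i)"
    by (rule mult_left_mono) simp
  then show ?thesis using norm_le_infnorm[of "x - y"] by (simp add: dist_norm)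
qed

lemma same_cell_height_0:
  fixes x y p0 :: "'a::euclidean_space"
  assumes md: "MD > 0" and "dist x p0 \<le> MD" and "dist y p0 \<le> MD"
  shows "same_cell MD p0 s 0 x y"
proof -
  have "cell MD p0 s 0 z b = 0" if "dist z p0 \<le> MD" and b: "b \<in> Basis" for z b
  proof -
    have "\<bar>z \<bullet> b - p0 \<bullet> b\<bar> \<le> MD"
      using Basis_le_norm[OF b, of "z - p0"] that by (simp add: dist_norm inner_diff_left)
    then have "0 \<le> \<lfloor>(z \<bullet> b - p0 \<bullet> b + MD) / (2 * MD)\<rfloor>" using md by simp
    then show ?thesis unfolding cell_def by (simp add: algebra_simps)
  qed
  then show ?thesis using assms by (simp add: same_cell_def)
qed

lemma ex_cell_diameter_less:
  assumes "\<delta> > 0" and "MD > 0"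
  shows "\<exists>i::nat. sqrt (real DIM('a::euclidean_space)) * (2 * MD / 2 ^ i) < \<delta>"
proof -
  obtain n :: nat where "sqrt (real DIM('a)) * (2 * MD) / \<delta> < 2 ^ n"
    using real_arch_pow[of 2] by fastforce
  then have "sqrt (real DIM('a)) * (2 * MD) < \<delta> * 2 ^ n"
    using assms by (simp add: divide_less_eq mult.commute)
  then have "sqrt (real DIM('a)) * (2 * MD) / 2 ^ n < \<delta>" by (simp add: divide_less_eq)
  then show ?thesis by (intro exI[of _ n]) simp
qed

lemma ex_height_isolating:
  fixes P :: "'a::euclidean_space set"
  assumes fin: "finite P" and md: "MD > 0" and near: "\<And>z. z \<in> P \<Longrightarrow> dist z p0 \<le> MD"
    and u: "u \<in> P"
  shows "\<exists>i. \<forall>z\<in>P. z \<noteq> u \<longrightarrow> \<not> same_cell MD p0 s i u z"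
proof (cases "P - {u} = {}")
  case False
  define \<delta> where "\<delta> = Min ((\<lambda>z. dist u z) ` (P - {u}))"
  have "\<delta> \<in> (\<lambda>z. dist u z) ` (P - {u})" unfolding \<delta>_def using fin False by (intro Min_in) auto
  then have "\<delta> > 0" by auto
  then obtain i :: nat where i: "sqrt (real DIM('a)) * (2 * MD / 2 ^ i) < \<delta>"
    using ex_cell_diameter_less[OF _ md] by blast
  show ?thesis
  proof (intro exI[of _ i] ballI impI notI)
    fix z assume z: "z \<in> P" "z \<noteq> u" and same: "same_cell MD p0 s i u z"
    have "\<delta> \<le> dist u z" unfolding \<delta>_def using fin z by (intro Min_le) auto
    with same_cell_imp_dist_le[OF md near[OF u] near[OF z(1)] same] i show False by linarith
  qed
qed blast

lemma leaf_height_isolates: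
  fixes P :: "'a::euclidean_space set"
  assumes "finite P" and "MD > 0" and "\<And>z. z \<in> P \<Longrightarrow> dist z p0 \<le> MD"
    and "x \<in> P" and "y \<in> P" and "x \<noteq> y"
  shows "\<not> same_cell MD p0 s (leaf_height P MD p0 s x) x y"
proof -
  have "\<forall>z\<in>P. z \<noteq> x \<longrightarrow> \<not> same_cell MD p0 s (leaf_height P MD p0 s x) x z"
    unfolding leaf_height_def by (rule LeastI_ex) (rule ex_height_isolating[OF assms(1-4)])
  then show ?thesis using assms(5,6) by auto
qed

lemma same_cell_below_sep_height:
  fixes x y p0 :: "'a::euclidean_space"
  assumes "MD > 0" and "dist x p0 \<le> MD" and "dist y p0 \<le> MD"
    and sep: "\<not> same_cell MD p0 s i x y"
  shows "0 < sep_height MD p0 s x y \<and> sep_height MD p0 s x y \<le> i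
    \<and> same_cell MD p0 s (sep_height MD p0 s x y - 1) x y"
proof -
  let ?h = "sep_height MD p0 s x y"
  have "\<not> same_cell MD p0 s ?h x y" unfolding sep_height_def using sep by (rule LeastI)
  then have pos: "0 < ?h" using same_cell_height_0[OF assms(1-3)] by (cases ?h) auto
  have "?h \<le> i" unfolding sep_height_def using sep by (rule Least_le)
  moreover have "same_cell MD p0 s (?h - 1) x y"
    using not_less_Least[of "?h - 1"] pos unfolding sep_height_def by force
  ultimately show ?thesis using pos by blast
qed

lemma tree_dist_ge_dist:
  fixes P :: "'a::euclidean_space set"
  assumes fin: "finite P" and md: "MD > 0" and near: "\<And>z. z \<in> P \<Longrightarrow> dist z p0 \<le> MD"
    and x: "x \<in> P" and y: "y \<in> P"
  shows "dist x y \<le> tree_dist P MD p0 s x y"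
proof (cases "x = y")
  case False
  define h where "h = sep_height MD p0 s x y - 1"
  define lx where "lx = leaf_height P MD p0 s x"
  define ly where "ly = leaf_height P MD p0 s y"
  have "\<not> same_cell MD p0 s lx x y"
    unfolding lx_def using leaf_height_isolates[OF fin md near x y False] .
  then have "h < lx" and same_h: "same_cell MD p0 s h x y"
    using same_cell_below_sep_height[OF md near[OF x] near[OF y]] unfolding h_def by fastforce+
  have "\<not> same_cell MD p0 s ly y x"
    unfolding ly_def using leaf_height_isolates[OF fin md near y x] False by auto
  then have "h < ly"
    using same_cell_below_sep_height[OF md near[OF x] near[OF y], of s ly]
    unfolding h_def same_cell_def by fastforce
  have edge_le: "edge_weight TYPE('a) MD h \<le> (\<Sum>j\<in>{h..<l}. edge_weight TYPE('a) MD j)"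
    if "h < l" for l
    by (rule member_le_sum) (use that md in \<open>auto simp: edge_weight_def\<close>)
  have "dist x y \<le> sqrt DIM('a) * (2 * MD / 2 ^ h)"
    using same_cell_imp_dist_le[OF md near[OF x] near[OF y] same_h] .
  also have "\<dots> = 2 * edge_weight TYPE('a) MD h" by (simp add: edge_weight_def)
  also have "\<dots> \<le> (\<Sum>j\<in>{h..<lx}. edge_weight TYPE('a) MD j) + (\<Sum>j\<in>{h..<ly}. edge_weight TYPE('a) MD j)"
    using edge_le[OF \<open>h < lx\<close>] edge_le[OF \<open>h < ly\<close>] by linarith
  also have "\<dots> = tree_dist P MD p0 s x y"
    unfolding tree_dist_def h_def lx_def ly_def using False by simp
  finally show ?thesis .
qed (simp add: tree_dist_def)

lemma multi_tree_dist_ge_dist: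
  fixes P :: "'a::euclidean_space set"
  assumes "finite P" and "MD > 0" and diam: "\<And>z p. z \<in> P \<Longrightarrow> p \<in> P \<Longrightarrow> dist z p \<le> MD"
    and "p1 \<in> P" and "p2 \<in> P" and "p3 \<in> P" and "x \<in> P" and "y \<in> P"
  shows "dist x y \<le> multi_tree_dist P MD ((p1, s1), (p2, s2), (p3, s3)) x y"
  using tree_dist_ge_dist[OF assms(1,2) diam, of _ x y] assms(4-8)
  by (simp add: multi_tree_dist_def)

lemma Min_dist_le_multi_tree_dist_set:
  fixes P :: "'a::euclidean_space set"
  assumes "finite P" and "MD > 0" and "\<And>z p. z \<in> P \<Longrightarrow> p \<in> P \<Longrightarrow> dist z p \<le> MD"
    and "p1 \<in> P" and "p2 \<in> P" and "p3 \<in> P" and "x \<in> P" and S: "S \<subseteq> P" "S \<noteq> {}"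
  shows "Min ((\<lambda>q. dist x q) ` S) \<le> multi_tree_dist_set P MD ((p1, s1), (p2, s2), (p3, s3)) x S"
proof -
  have fin: "finite S" using S assms(1) finite_subset by blast
  have "Min ((\<lambda>q. dist x q) ` S) \<le> multi_tree_dist P MD ((p1, s1), (p2, s2), (p3, s3)) x q"
    if "q \<in> S" for q
  proof -
    have "Min ((\<lambda>q. dist x q) ` S) \<le> dist x q" using fin that by (intro Min_le) auto
    also have "\<dots> \<le> multi_tree_dist P MD ((p1, s1), (p2, s2), (p3, s3)) x q"
      by (rule multi_tree_dist_ge_dist[OF assms(1-7)]) (use that S in auto)
    finally show ?thesis .
  qed
  then show ?thesis using fin S unfolding multi_tree_dist_set_def by (subst Min_ge_iff) auto
qed

lemma pmf_embed_pmf_normalized: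
  assumes fin: "finite A" and nonneg: "\<And>x. x \<in> A \<Longrightarrow> 0 \<le> w x" and pos: "sum w A > 0"
  shows "pmf (embed_pmf (\<lambda>x. if x \<in> A then w x / sum w A else 0)) x
           = (if x \<in> A then w x / sum w A else 0)"
proof (rule pmf_embed_pmf)
  let ?f = "\<lambda>x. if x \<in> A then w x / sum w A else 0"
  show "0 \<le> ?f x" for x using nonneg pos by simp
  have "(\<integral>\<^sup>+x. ennreal (?f x) \<partial>count_space UNIV) = (\<Sum>x\<in>A. ennreal (?f x))"
    by (rule nn_integral_count_space') (use fin in auto)
  also have "\<dots> = ennreal (\<Sum>x\<in>A. w x / sum w A)" using nonneg pos by simp
  also have "\<dots> = 1" using pos by (simp flip: sum_divide_distrib)
  finally show "(\<integral>\<^sup>+x. ennreal (?f x) \<partial>count_space UNIV) = 1" .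
qed

lemma pmf_multi_tree_sample:
  fixes P :: "'a::euclidean_space set"
  assumes "finite P" and "M \<ge> 0" and "(\<Sum>y\<in>P. mt_weight P MD T M S y) > 0"
  shows "pmf (multi_tree_sample P MD T M S) x
           = (if x \<in> P then mt_weight P MD T M S x / (\<Sum>y\<in>P. mt_weight P MD T M S y) else 0)"
  unfolding multi_tree_sample_def
  by (rule pmf_embed_pmf_normalized) (use assms in \<open>auto simp: mt_weight_def\<close>)

lemma accept_prob_bounds: "0 \<le> accept_prob P MD T c S Q x \<and> accept_prob P MD T c S Q x \<le> 1"
  by (simp add: accept_prob_def)

lemma spmf_rejection_loop:
  fixes p :: "'a pmf" and a :: "'a \<Rightarrow> real" and A :: "'a set"
  assumes loop: "N = bind_spmf (spmf_of_pmf p) (\<lambda>z.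
                   bind_spmf (spmf_of_pmf (bernoulli_pmf (a z))) (\<lambda>b. if b then return_spmf z else N))"
    and "finite A" and "set_pmf p \<subseteq> A" and a01: "\<And>z. 0 \<le> a z \<and> a z \<le> 1"
    and pos: "(\<Sum>z\<in>A. pmf p z * a z) > 0"
  shows "spmf N x = pmf p x * a x / (\<Sum>z\<in>A. pmf p z * a z)"
proof -
  let ?v = "spmf N x" and ?acc = "\<Sum>z\<in>A. pmf p z * a z"
  have "?v = (\<integral>z. a z * indicator {x} z + (1 - a z) * ?v \<partial>measure_pmf p)"
    by (subst loop, simp add: pmf_bind, rule Bochner_Integration.integral_cong)
       (use a01 in \<open>simp_all add: indicator_def algebra_simps\<close>)
  also have "\<dots> = (\<Sum>z\<in>A. pmf p z * (a z * indicator {x} z + (1 - a z) * ?v))"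
    using assms(2,3) by (subst integral_measure_pmf[of A]) auto
  also have "\<dots> = (\<Sum>z\<in>A. pmf p z * a z * indicator {x} z) + ?v * (1 - ?acc)"
    using sum_pmf_eq_1[OF assms(2,3)]
    by (simp add: algebra_simps sum.distrib sum_distrib_left sum_subtractf flip: sum_distrib_right)
  also have "(\<Sum>z\<in>A. pmf p z * a z * indicator {x} z) = pmf p x * a x"
    using assms(2,3) by (cases "x \<in> A") (auto simp: indicator_def pmf_eq_0_set_pmf)
  finally show ?thesis using pos by (simp add: field_simps)
qed

lemma spmf_next_added:
  fixes P :: "'a::euclidean_space set"
  assumes fin: "finite P" and "M \<ge> 0" and "(\<Sum>y\<in>P. mt_weight P MD T M S y) > 0"
    and "(\<Sum>z\<in>P. pmf (multi_tree_sample P MD T M S) z * accept_prob P MD T c S Q z) > 0"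
  shows "spmf (next_added P MD T M c S Q) x
    = pmf (multi_tree_sample P MD T M S) x * accept_prob P MD T c S Q x
      / (\<Sum>z\<in>P. pmf (multi_tree_sample P MD T M S) z * accept_prob P MD T c S Q z)"
proof (rule spmf_rejection_loop[OF next_added.simps fin _ accept_prob_bounds assms(4)])
  show "set_pmf (multi_tree_sample P MD T M S) \<subseteq> P"
    using pmf_multi_tree_sample[OF assms(1-3)] by (auto simp: set_pmf_iff split: if_splits)
qed

lemma spmf_next_added_empty:
  fixes P :: "'a::euclidean_space set"
  assumes fin: "finite P" and "P \<noteq> {}" and "M > 0" and "x \<in> P"
  shows "spmf (next_added P MD T M c {} Q) x = 1 / real (card P)"
proof -
  have card: "card P > 0" using assms(1,2) by (simp add: card_gt_0_iff)
  have weights: "(\<Sum>y\<in>P. mt_weight P MD T M {} y) = real (card P) * M"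
    by (simp add: mt_weight_def)
  have pmf: "pmf (multi_tree_sample P MD T M {}) z = (if z \<in> P then 1 / real (card P) else 0)" for z
    using pmf_multi_tree_sample[OF fin, of M MD T "{}" z] card \<open>M > 0\<close>
    by (simp add: weights mt_weight_def)
  have accept: "accept_prob P MD T c {} Q z = 1" for z by (simp add: accept_prob_def)
  have "(\<Sum>z\<in>P. pmf (multi_tree_sample P MD T M {}) z * accept_prob P MD T c {} Q z) = 1"
    using card by (simp add: pmf accept)
  then show ?thesis
    using spmf_next_added[OF fin, of M MD T "{}" c Q x] card \<open>M > 0\<close> \<open>x \<in> P\<close>
    by (simp add: weights pmf accept)
qed

lemma sq_div_mul_min_one_eq:
  fixes d m c Z :: real
  assumes "0 \<le> d" and "d \<le> c * m" and "c > 0"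
  shows "m\<^sup>2 / Z * min 1 (d\<^sup>2 / (c\<^sup>2 * m\<^sup>2)) = d\<^sup>2 / (c\<^sup>2 * Z)"
proof (cases "m = 0")
  case True
  then show ?thesis using assms by simp
next
  case False
  have "d\<^sup>2 \<le> (c * m)\<^sup>2" using assms by (intro power_mono) auto
  then have "d\<^sup>2 / (c\<^sup>2 * m\<^sup>2) \<le> 1" using False assms(3) by (simp add: power_mult_distrib)
  then show ?thesis using False assms(3) by (simp add: min_absorb2)
qed

lemma spmf_next_added_nonempty:
  fixes P :: "'a::euclidean_space set" and p1 p2 p3 :: 'a and s1 s2 s3 :: real
  defines "T \<equiv> ((p1, s1), (p2, s2), (p3, s3))"
  assumes fin: "finite P" and diam: "\<And>z p. z \<in> P \<Longrightarrow> p \<in> P \<Longrightarrow> dist z p \<le> MD"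
    and p: "p1 \<in> P" "p2 \<in> P" "p3 \<in> P" and "M \<ge> 0" and "c > 0"
    and S: "S \<subseteq> P" "S \<noteq> {}" "S \<noteq> P" and lsh: "lsh_successful P S c Q" and "x \<in> P"
  shows "spmf (next_added P MD T M c S Q) x = (dist x (Q x))\<^sup>2 / (\<Sum>y\<in>P. (dist y (Q y))\<^sup>2)"
proof -
  define m where "m z = multi_tree_dist_set P MD T z S" for z
  define d where "d z = dist z (Q z)" for z
  define Z where "Z = (\<Sum>y\<in>P. (m y)\<^sup>2)"
  obtain y0 q0 where y0: "y0 \<in> P" "y0 \<notin> S" and q0: "q0 \<in> S" using S by blast
  have "0 < dist y0 q0" using y0 q0 by auto
  also have "\<dots> \<le> MD" using diam y0 q0 S by blast
  finally have md: "MD > 0" .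
  have finS: "finite S" using S fin finite_subset by blast
  have Min_le_m: "Min ((\<lambda>q. dist z q) ` S) \<le> m z" if "z \<in> P" for z
    unfolding m_def T_def by (rule Min_dist_le_multi_tree_dist_set[OF fin md diam p that S(1,2)])
  have d_le: "d z \<le> c * m z" if "z \<in> P" for z
    using lsh that Min_le_m[OF that] \<open>c > 0\<close> unfolding lsh_successful_def d_def
    by (meson mult_left_mono less_imp_le order_trans)
  have "0 < Min ((\<lambda>q. dist y0 q) ` S)" using finS S y0 by (subst Min_gr_iff) auto
  then have "0 < Z"
    unfolding Z_def using Min_le_m[OF y0(1)] by (intro sum_pos2[OF fin y0(1)]) auto
  have "0 < (\<Sum>y\<in>P. (d y)\<^sup>2)"
    using lsh y0 unfolding lsh_successful_def d_def by (intro sum_pos2[OF fin y0(1)]) auto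
  have weight: "(\<Sum>y\<in>P. mt_weight P MD T M S y) = Z"
    using S unfolding Z_def m_def mt_weight_def by simp
  have accepted: "pmf (multi_tree_sample P MD T M S) z * accept_prob P MD T c S Q z
      = (d z)\<^sup>2 / (c\<^sup>2 * Z)" if "z \<in> P" for z
    using pmf_multi_tree_sample[OF fin \<open>M \<ge> 0\<close>, of MD T S z] sq_div_mul_min_one_eq[OF _ d_le[OF that] \<open>c > 0\<close>]
      that S \<open>0 < Z\<close> unfolding weight by (simp add: mt_weight_def accept_prob_def m_def d_def)
  have total: "(\<Sum>z\<in>P. pmf (multi_tree_sample P MD T M S) z * accept_prob P MD T c S Q z)
      = (\<Sum>y\<in>P. (d y)\<^sup>2) / (c\<^sup>2 * Z)"
    by (simp add: accepted sum_divide_distrib)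
  have "spmf (next_added P MD T M c S Q) x = ((d x)\<^sup>2 / (c\<^sup>2 * Z)) / ((\<Sum>y\<in>P. (d y)\<^sup>2) / (c\<^sup>2 * Z))"
    using spmf_next_added[OF fin \<open>M \<ge> 0\<close>, of MD T S c Q x] \<open>0 < Z\<close> \<open>c > 0\<close>
      \<open>0 < (\<Sum>y\<in>P. (d y)\<^sup>2)\<close>
    unfolding weight total accepted[OF \<open>x \<in> P\<close>] by simp
  also have "\<dots> = (d x)\<^sup>2 / (\<Sum>y\<in>P. (d y)\<^sup>2)" using \<open>0 < Z\<close> \<open>c > 0\<close> by simp
  finally show ?thesis unfolding d_def .
qed

lemma dist_le_if_Max_dist_le:
  assumes "finite P" and "Max {dist x y | x y. x \<in> P \<and> y \<in> P} \<le> MD" and "x \<in> P" and "y \<in> P"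
  shows "dist x y \<le> MD"
proof -
  have "{dist x y | x y. x \<in> P \<and> y \<in> P} = (\<lambda>(x, y). dist x y) ` (P \<times> P)" by auto
  then have "dist x y \<le> Max {dist x y | x y. x \<in> P \<and> y \<in> P}"
    using assms by (intro Max_ge) auto
  then show ?thesis using assms(2) by linarith
qed

theorem mainTheorem7:
  fixes P S :: "'a::euclidean_space set" and MD M c s1 s2 s3 :: real and p1 p2 p3 :: 'a
    and Q :: "'a \<Rightarrow> 'a"
  assumes "finite P" and "P \<noteq> {}"
    and "Max {dist x y | x y. x \<in> P \<and> y \<in> P} \<le> MD"
    and "MD \<le> 2 * Max {dist x y | x y. x \<in> P \<and> y \<in> P}"
    and "p1 \<in> P" and "p2 \<in> P" and "p3 \<in> P"
    and "s1 \<in> {0..MD}" and "s2 \<in> {0..MD}" and "s3 \<in> {0..MD}"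
    and "M > 0" and "c > 1"
  shows "(\<forall>x\<in>P. spmf (next_added P MD ((p1, s1), (p2, s2), (p3, s3)) M c {} Q) x
                  = 1 / real (card P))
       \<and> ((S \<subseteq> P \<and> S \<noteq> {} \<and> S \<noteq> P \<and> lsh_successful P S c Q) \<longrightarrow>
           (\<forall>x\<in>P. spmf (next_added P MD ((p1, s1), (p2, s2), (p3, s3)) M c S Q) x
                  = (dist x (Q x))\<^sup>2 / (\<Sum>y\<in>P. (dist y (Q y))\<^sup>2)))"
proof -
  have diam: "dist z p \<le> MD" if "z \<in> P" and "p \<in> P" for z p
    using dist_le_if_Max_dist_le[OF assms(1,3) that] .
  show ?thesis
    using spmf_next_added_empty[OF assms(1,2,11)]
      spmf_next_added_nonempty[OF assms(1) diam assms(5-7), of M c S Q] assms(11,12)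
    by auto
qed

end
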